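(* Let $(R,\mathfrak m,k)$ be a commutative noetherian local ring with $\mathfrak m^4=0$ and $\mu(\mathfrak m)=e\ge3$. (1) If $H_R(-1)=0$ and an exact zero divisor $a$ lies in $\mathfrak m\smallsetminus\mathfrak m^2$, then every complementary divisor of $a$ also lies in $\mathfrak m\smallsetminus\mathfrak m^2$. (2) If $\mu(\mathfrak m^3)+2\le e$, then no non-zero exact zero divisor of $R$ is contained in $\mathfrak m^2$.
   Context: $H_R(t)=\sum_{n\ge0}\operatorname{rank}_k(\mathfrak m^n/\mathfrak m^{n+1})t^n$ is the Hilbert series of $R$, and $\mu(N)$ is the minimal number of generators of $N$. An element $a\in R$ is an exact zero divisor if $R\neq(0:_R a)\cong R/aR\neq0$; equivalently there exists $b\in R$ with $(0:_R a)=bR$ and $(0:_R b)=aR$, and any such $b$ is called a complementary divisor of $a$. *)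

theory Defs
  imports Main
begin

text \<open>The commutative ring R is the whole carrier of a type 'a :: comm_ring_1.\<close>

definition is_ideal :: "'a::comm_ring_1 set \<Rightarrow> bool" where
  "is_ideal I \<longleftrightarrow> 0 \<in> I \<and> (\<forall>x\<in>I. \<forall>y\<in>I. x + y \<in> I) \<and> (\<forall>r. \<forall>x\<in>I. r * x \<in> I)"

definition ideal_gen :: "'a::comm_ring_1 set \<Rightarrow> 'a set" where
  "ideal_gen S = \<Inter> {I. is_ideal I \<and> S \<subseteq> I}"

definition principal :: "'a::comm_ring_1 \<Rightarrow> 'a set" where
  "principal a = {r * a | r. True}"

definition ann :: "'a::comm_ring_1 \<Rightarrow> 'a set" where
  "ann a = {x. x * a = 0}"

definition noetherian_ring :: "'a::comm_ring_1 itself \<Rightarrow> bool" where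
  "noetherian_ring _ \<longleftrightarrow> (\<forall>I::'a set. is_ideal I \<longrightarrow> (\<exists>S. finite S \<and> ideal_gen S = I))"

definition max_ideal :: "'a::comm_ring_1 set" where
  "max_ideal = {x. \<not> x dvd 1}"

text \<open>Local: the non-units form an ideal (equivalently, there is a unique maximal ideal).\<close>
definition local_ring :: "'a::comm_ring_1 itself \<Rightarrow> bool" where
  "local_ring _ \<longleftrightarrow> (0::'a) \<noteq> 1 \<and> is_ideal (max_ideal :: 'a set)"

definition ideal_prod :: "'a::comm_ring_1 set \<Rightarrow> 'a set \<Rightarrow> 'a set" where
  "ideal_prod I J = ideal_gen {x * y | x y. x \<in> I \<and> y \<in> J}"

primrec ideal_pow :: "'a::comm_ring_1 set \<Rightarrow> nat \<Rightarrow> 'a set" where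
  "ideal_pow I 0 = UNIV"
| "ideal_pow I (Suc n) = ideal_prod (ideal_pow I n) I"

definition mu :: "'a::comm_ring_1 set \<Rightarrow> nat" where
  "mu N = (LEAST n. \<exists>S. finite S \<and> card S = n \<and> ideal_gen S = N)"

text \<open>rank_k(m^n/m^(n+1)): the dimension of the k-vector space m^n/m^(n+1), i.e. the minimal
  size of a spanning set; the k-span of the classes of S \<subseteq> m^n is (ideal_gen S + m^(n+1))/m^(n+1).\<close>
definition hilbert_fun :: "'a::comm_ring_1 itself \<Rightarrow> nat \<Rightarrow> nat" where
  "hilbert_fun _ n = (LEAST d. \<exists>S::'a set. finite S \<and> card S = d \<and>
      S \<subseteq> ideal_pow max_ideal n \<and>
      ideal_pow max_ideal n = {x + y | x y. x \<in> ideal_gen S \<and> y \<in> ideal_pow max_ideal (Suc n)})"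

text \<open>H_R(-1), meaningful when H_R is a polynomial (finitely many nonzero coefficients).\<close>
definition hilbert_series_at_neg1 :: "'a::comm_ring_1 itself \<Rightarrow> int" where
  "hilbert_series_at_neg1 T = (\<Sum>n\<in>{n. hilbert_fun T n \<noteq> 0}. (-1) ^ n * int (hilbert_fun T n))"

text \<open>Exact zero divisor: R \<noteq> (0:a), R/aR \<noteq> 0, and (0:a) \<cong> R/aR as R-modules; an R-isomorphism
  R/aR \<rightarrow> (0:a) is the same as an R-linear map R \<rightarrow> R with image (0:a) and kernel aR.\<close>
definition exact_zero_divisor :: "'a::comm_ring_1 \<Rightarrow> bool" where
  "exact_zero_divisor a \<longleftrightarrow> ann a \<noteq> UNIV \<and> principal a \<noteq> UNIV \<and>
     (\<exists>f::'a \<Rightarrow> 'a. (\<forall>x y. f (x + y) = f x + f y) \<and> (\<forall>r x. f (r * x) = r * f x) \<and>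
        range f = ann a \<and> {x. f x = 0} = principal a)"

definition complementary_divisor :: "'a::comm_ring_1 \<Rightarrow> 'a \<Rightarrow> bool" where
  "complementary_divisor a b \<longleftrightarrow> ann a = principal b \<and> ann b = principal a"

end

theory Submission
  imports Defs "HOL-Library.Set_Algebras"
begin

text \<open>
  Write \<open>m\<close> for the maximal ideal. Everything rests on one counting principle: if
  \<open>c m\<close> lies in an ideal generated by elements \<open>c w\<^sub>1, \<dots>, c w\<^sub>k\<close> of \<open>c m\<close>, then
  \<open>m \<subseteq> (w\<^sub>1, \<dots>, w\<^sub>k) + (0 : c)\<close>; if moreover \<open>(0 : c) \<subseteq> (v) + m\<^sup>2\<close>, Nakayama's lemma
  (which for nilpotent \<open>m\<close> is a plain descending induction) gives \<open>\<mu>(m) \<le> k + 1\<close>.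

  (1) If the complementary divisor \<open>b\<close> of \<open>a \<in> m - m\<^sup>2\<close> lay in \<open>m\<^sup>2\<close>, then \<open>m\<^sup>2 b = 0\<close> forces
  \<open>m\<^sup>2 = a m\<close> and \<open>m\<^sup>3 = a m\<^sup>2\<close>. Hence \<open>H(2) \<le> H(1)\<close>, and \<open>H(-1) = 0\<close> leaves \<open>H(3) \<le> 1\<close>.
  Dividing a generator of \<open>m\<^sup>3\<close> by \<open>a\<close> shows that \<open>m\<^sup>2\<close> is generated by two elements, and
  dividing these by \<open>a\<close> once more gives \<open>\<mu>(m) \<le> 2\<close>.

  (2) Let \<open>a \<in> m\<^sup>2\<close> have complementary divisor \<open>b\<close>. If \<open>b \<in> m\<^sup>2\<close>, then \<open>m\<^sup>3 \<subseteq> a m\<close>, and dividing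
  generators of \<open>m\<^sup>3\<close> by \<open>a\<close> gives \<open>\<mu>(m) \<le> \<mu>(m\<^sup>3)\<close>. Otherwise \<open>m\<^sup>2 \<subseteq> b m\<close>, so
  \<open>m\<^sup>3 \<subseteq> b\<^sup>2 m\<close> and \<open>a = b v\<close> with \<open>v \<in> m\<close>; dividing by \<open>b\<^sup>2\<close>, where \<open>(0 : b\<^sup>2) \<subseteq> (v) + (0 : b)\<close>,
  gives \<open>\<mu>(m) \<le> \<mu>(m\<^sup>3) + 1\<close>.
\<close>

section \<open>Ideals, sums of ideals and annihilators\<close>

lemma is_idealD:
  assumes "is_ideal I"
  shows "0 \<in> I" "x \<in> I \<Longrightarrow> y \<in> I \<Longrightarrow> x + y \<in> I" "x \<in> I \<Longrightarrow> r * x \<in> I"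
  using assms unfolding is_ideal_def by auto

lemma is_idealI:
  assumes "0 \<in> I" "\<And>x y. x \<in> I \<Longrightarrow> y \<in> I \<Longrightarrow> x + y \<in> I" "\<And>r x. x \<in> I \<Longrightarrow> r * x \<in> I"
  shows "is_ideal I"
  using assms unfolding is_ideal_def by blast

lemma ideal_mult_right: "is_ideal I \<Longrightarrow> x \<in> I \<Longrightarrow> x * r \<in> I"
  by (metis is_idealD(3) mult.commute)

lemma is_ideal_UNIV: "is_ideal (UNIV :: 'a::comm_ring_1 set)"
  by (simp add: is_ideal_def)

lemma is_ideal_plus:
  assumes I: "is_ideal I" and J: "is_ideal J"
  shows "is_ideal (I + J)"
proof (rule is_idealI)
  show "0 \<in> I + J"
    using set_plus_intro[OF is_idealD(1)[OF I] is_idealD(1)[OF J]] by simp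
next
  fix x y assume "x \<in> I + J" "y \<in> I + J"
  then obtain x1 x2 y1 y2 where "x = x1 + x2" "y = y1 + y2" "x1 \<in> I" "x2 \<in> J" "y1 \<in> I" "y2 \<in> J"
    by (metis set_plus_elim)
  moreover have "x1 + x2 + (y1 + y2) = (x1 + y1) + (x2 + y2)"
    by (simp add: algebra_simps)
  ultimately show "x + y \<in> I + J"
    by (metis I J is_idealD(2) set_plus_intro)
next
  fix r x assume "x \<in> I + J"
  then obtain x1 x2 where "x = x1 + x2" "x1 \<in> I" "x2 \<in> J"
    by (metis set_plus_elim)
  then show "r * x \<in> I + J"
    by (metis I J distrib_left is_idealD(3) set_plus_intro)
qed

lemma ideal_plus_subset:
  assumes "is_ideal K" "A \<subseteq> K" "B \<subseteq> K"
  shows "A + B \<subseteq> K"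
proof
  fix x assume "x \<in> A + B"
  then obtain a b where "x = a + b" "a \<in> A" "b \<in> B"
    by (rule set_plus_elim)
  then show "x \<in> K"
    using assms is_idealD(2) by blast
qed

lemma subset_ideal_plus: "is_ideal J \<Longrightarrow> I \<subseteq> I + J"
  using set_plus_intro[of _ I 0 J] is_idealD(1) by fastforce

lemma is_ideal_image_mult:
  assumes I: "is_ideal I"
  shows "is_ideal ((*) c ` I)"
proof (rule is_idealI)
  show "0 \<in> (*) c ` I"
    using is_idealD(1)[OF I] by (auto intro: image_eqI[of _ _ 0])
next
  fix x y assume "x \<in> (*) c ` I" "y \<in> (*) c ` I"
  then show "x + y \<in> (*) c ` I"
    using is_idealD(2)[OF I] by (auto simp flip: distrib_left)
next
  fix r x assume "x \<in> (*) c ` I"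
  then show "r * x \<in> (*) c ` I"
    using is_idealD(3)[OF I] by (auto simp: mult.left_commute)
qed

lemma is_ideal_preimage_mult: "is_ideal K \<Longrightarrow> is_ideal {y. c * y \<in> K}"
  by (rule is_idealI) (auto simp: distrib_left mult.left_commute is_idealD)

lemma is_ideal_ideal_gen: "is_ideal (ideal_gen S)"
  unfolding is_ideal_def ideal_gen_def by auto

lemma ideal_gen_subset: "S \<subseteq> ideal_gen S"
  unfolding ideal_gen_def by auto

lemma ideal_gen_least: "is_ideal I \<Longrightarrow> S \<subseteq> I \<Longrightarrow> ideal_gen S \<subseteq> I"
  unfolding ideal_gen_def by auto

lemma ideal_gen_mono: "A \<subseteq> B \<Longrightarrow> ideal_gen A \<subseteq> ideal_gen B"
  by (meson is_ideal_ideal_gen ideal_gen_least ideal_gen_subset order_trans)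

lemma ideal_gen_empty: "ideal_gen {} = {0::'a::comm_ring_1}"
proof -
  have "is_ideal {0::'a}" unfolding is_ideal_def by auto
  then show ?thesis
    using ideal_gen_least[of "{0::'a}" "{}"] is_idealD(1)[OF is_ideal_ideal_gen] by blast
qed

lemma ideal_gen_one: "ideal_gen {1::'a::comm_ring_1} = UNIV"
  using is_idealD(3)[OF is_ideal_ideal_gen, of 1 "{1::'a}"] ideal_gen_subset[of "{1::'a}"] by auto

lemma principal_eq_image: "principal a = (*) a ` UNIV"
  by (auto simp: principal_def mult.commute)

lemma principal_eq_ideal_gen: "principal a = ideal_gen {a}"
proof
  show "ideal_gen {a} \<subseteq> principal a"
    unfolding principal_eq_image
    by (rule ideal_gen_least[OF is_ideal_image_mult[OF is_ideal_UNIV]]) (auto intro: image_eqI[of _ _ 1])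
  show "principal a \<subseteq> ideal_gen {a}"
    unfolding principal_def using ideal_gen_subset is_idealD(3)[OF is_ideal_ideal_gen] by blast
qed

lemma ideal_gen_Un: "ideal_gen (A \<union> B) = ideal_gen A + ideal_gen B"
proof
  show "ideal_gen (A \<union> B) \<subseteq> ideal_gen A + ideal_gen B"
  proof (rule ideal_gen_least[OF is_ideal_plus[OF is_ideal_ideal_gen is_ideal_ideal_gen]])
    have "ideal_gen A \<subseteq> ideal_gen A + ideal_gen B" "ideal_gen B \<subseteq> ideal_gen B + ideal_gen A"
      by (intro subset_ideal_plus is_ideal_ideal_gen)+
    then show "A \<union> B \<subseteq> ideal_gen A + ideal_gen B"
      using ideal_gen_subset[of A] ideal_gen_subset[of B] by (auto simp: add.commute)
  qed
  show "ideal_gen A + ideal_gen B \<subseteq> ideal_gen (A \<union> B)"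
    by (intro ideal_plus_subset is_ideal_ideal_gen ideal_gen_mono) auto
qed

lemma ideal_gen_image_mult: "ideal_gen ((*) c ` U) = (*) c ` ideal_gen U"
proof
  show "ideal_gen ((*) c ` U) \<subseteq> (*) c ` ideal_gen U"
    by (intro ideal_gen_least is_ideal_image_mult is_ideal_ideal_gen image_mono ideal_gen_subset)
  have "ideal_gen U \<subseteq> {y. c * y \<in> ideal_gen ((*) c ` U)}"
    by (rule ideal_gen_least[OF is_ideal_preimage_mult[OF is_ideal_ideal_gen]])
      (use ideal_gen_subset in blast)
  then show "(*) c ` ideal_gen U \<subseteq> ideal_gen ((*) c ` U)"
    by blast
qed

lemma mem_plus_ann_if_mult_eq:
  assumes "c * x = c * y" "y \<in> J"
  shows "x \<in> J + ann c"
proof -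
  have "x - y \<in> ann c"
    using assms(1) by (simp add: ann_def algebra_simps)
  then have "y + (x - y) \<in> J + ann c"
    using assms(2) by (rule set_plus_intro[rotated])
  then show ?thesis
    by simp
qed

lemma subset_ideal_gen_plus_ann:
  assumes "finite S" "S \<subseteq> (*) c ` J" "(*) c ` I \<subseteq> ideal_gen S"
  obtains W where "W \<subseteq> J" "finite W" "card W = card S" "I \<subseteq> ideal_gen W + ann c"
proof -
  obtain W where W: "W \<subseteq> J" "inj_on ((*) c) W" "S = (*) c ` W"
    using assms(2) unfolding subset_image_inj by blast
  have "I \<subseteq> ideal_gen W + ann c"
  proof
    fix x assume "x \<in> I"
    then have "c * x \<in> (*) c ` ideal_gen W"
      using assms(3) W(3) ideal_gen_image_mult by blast
    then obtain y where "y \<in> ideal_gen W" "c * x = c * y"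
      by blast
    then show "x \<in> ideal_gen W + ann c"
      by (intro mem_plus_ann_if_mult_eq)
  qed
  moreover have "finite W"
    using W(2,3) assms(1) by (simp add: finite_image_iff)
  moreover have "card W = card S"
    using W(2,3) by (simp add: card_image)
  ultimately show ?thesis
    using that W(1) by blast
qed

lemma ann_mult_self_subset:
  assumes "ann b = principal (v * b)"
  shows "ann (b * b) \<subseteq> ideal_gen {v} + ann b"
proof
  fix x assume "x \<in> ann (b * b)"
  then have "x * b \<in> ann b"
    by (simp add: ann_def mult.assoc)
  then obtain k where k: "x * b = k * (v * b)"
    unfolding assms principal_def by blast
  have "(x - k * v) * b = x * b - k * (v * b)"
    by (simp add: algebra_simps)
  then have "x - k * v \<in> ann b"
    using k by (simp add: ann_def)
  have "k * v \<in> principal v"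
    unfolding principal_def by blast
  then have "k * v \<in> ideal_gen {v}"
    by (simp add: principal_eq_ideal_gen)
  then have "k * v + (x - k * v) \<in> ideal_gen {v} + ann b"
    using \<open>x - k * v \<in> ann b\<close> by (rule set_plus_intro)
  then show "x \<in> ideal_gen {v} + ann b"
    by simp
qed

section \<open>Products and powers of ideals\<close>

lemma ideal_prod_mem:
  assumes "x \<in> I" "y \<in> J"
  shows "x * y \<in> ideal_prod I J"
proof -
  have "x * y \<in> {x * y |x y. x \<in> I \<and> y \<in> J}"
    using assms by blast
  then show ?thesis
    unfolding ideal_prod_def by (rule subsetD[OF ideal_gen_subset])
qed

lemma ideal_prod_least:
  assumes "is_ideal K" "\<And>x y. x \<in> I \<Longrightarrow> y \<in> J \<Longrightarrow> x * y \<in> K"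
  shows "ideal_prod I J \<subseteq> K"
  unfolding ideal_prod_def
proof (rule ideal_gen_least[OF assms(1)])
  show "{x * y |x y. x \<in> I \<and> y \<in> J} \<subseteq> K"
    using assms(2) by blast
qed

lemma is_ideal_ideal_prod: "is_ideal (ideal_prod I J)"
  by (simp add: ideal_prod_def is_ideal_ideal_gen)

lemma is_ideal_ideal_pow: "is_ideal (ideal_pow I n)"
  by (cases n) (simp_all add: is_ideal_UNIV is_ideal_ideal_prod)

lemma ideal_prod_UNIV_left:
  assumes "is_ideal I"
  shows "ideal_prod UNIV I = I"
proof
  show "ideal_prod UNIV I \<subseteq> I"
    by (rule ideal_prod_least[OF assms is_idealD(3)[OF assms]])
  show "I \<subseteq> ideal_prod UNIV I"
    using ideal_prod_mem[of 1 UNIV _ I] by auto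
qed

lemma ideal_pow_Suc_0 [simp]: "is_ideal I \<Longrightarrow> ideal_pow I (Suc 0) = I"
  by (simp add: ideal_prod_UNIV_left)

lemma ideal_pow_Suc_subset: "ideal_pow I (Suc n) \<subseteq> ideal_pow I n"
  by (simp add: ideal_prod_least is_ideal_ideal_pow ideal_mult_right)

lemma ideal_pow_antimono: "m \<le> n \<Longrightarrow> ideal_pow I n \<subseteq> ideal_pow I m"
proof (induction n rule: dec_induct)
  case (step n)
  then show ?case
    using ideal_pow_Suc_subset[of I n] by order
qed simp

lemma ideal_pow_mult:
  assumes I: "is_ideal I" and x: "x \<in> ideal_pow I i"
  shows "y \<in> ideal_pow I j \<Longrightarrow> x * y \<in> ideal_pow I (i + j)"
proof (induction j arbitrary: y)
  case 0
  then show ?case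
    using x by (simp add: ideal_mult_right[OF is_ideal_ideal_pow])
next
  case (Suc j)
  have "ideal_prod (ideal_pow I j) I \<subseteq> {y. x * y \<in> ideal_pow I (i + Suc j)}"
  proof (rule ideal_prod_least[OF is_ideal_preimage_mult[OF is_ideal_ideal_pow]])
    fix p q assume "p \<in> ideal_pow I j" "q \<in> I"
    then show "p * q \<in> {y. x * y \<in> ideal_pow I (i + Suc j)}"
      using ideal_prod_mem[OF Suc.IH] by (simp add: mult.assoc)
  qed
  then show ?case
    using Suc.prems by auto
qed

lemma ideal_prod_subset_image_mult:
  assumes "I \<subseteq> (*) a ` J"
  shows "ideal_prod I K \<subseteq> (*) a ` ideal_prod J K"
proof (rule ideal_prod_least[OF is_ideal_image_mult[OF is_ideal_ideal_prod]])
  fix x y assume "x \<in> I" "y \<in> K"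
  then obtain r where "r \<in> J" "x = a * r"
    using assms by blast
  then show "x * y \<in> (*) a ` ideal_prod J K"
    using ideal_prod_mem[of r J y K] \<open>y \<in> K\<close> by (auto simp: mult.assoc)
qed

lemma ideal_pow_subset_plus_ideal_pow_Suc:
  assumes I: "is_ideal I" and J: "is_ideal J" and gen: "I \<subseteq> J + ideal_pow I 2" and "k \<ge> 1"
  shows "ideal_pow I k \<subseteq> J + ideal_pow I (Suc k)"
  using \<open>k \<ge> 1\<close>
proof (induction k rule: nat_induct_at_least)
  case base
  then show ?case
    using gen I by (simp add: numeral_2_eq_2 ideal_prod_UNIV_left)
next
  case (Suc k)
  have "ideal_prod (ideal_pow I k) I \<subseteq> J + ideal_pow I (Suc (Suc k))"
  proof (rule ideal_prod_least[OF is_ideal_plus[OF J is_ideal_ideal_pow]])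
    fix p q assume "p \<in> ideal_pow I k" "q \<in> I"
    then obtain z w where "p = z + w" "z \<in> J" "w \<in> ideal_pow I (Suc k)"
      using Suc.IH set_plus_elim by blast
    then show "p * q \<in> J + ideal_pow I (Suc (Suc k))"
      using ideal_mult_right[OF J] ideal_prod_mem[of w _ q I] \<open>q \<in> I\<close>
      by (auto simp: distrib_right)
  qed
  then show ?case
    by simp
qed

lemma nilpotent_nakayama:
  assumes I: "is_ideal I" and J: "is_ideal J" and nil: "ideal_pow I n = {0}"
    and gen: "I \<subseteq> J + ideal_pow I 2"
  shows "I \<subseteq> J"
proof -
  have "ideal_pow I m \<subseteq> J" if "m \<ge> 1" for m
  proof -
    define j where "j = max n m"
    have top: "ideal_pow I j \<subseteq> J"
      using ideal_pow_antimono[of n j I] nil is_idealD(1)[OF J] by (auto simp: j_def)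
    have "m \<le> j"
      by (simp add: j_def)
    then show ?thesis
      using that
    proof (induction m rule: inc_induct)
      case base
      show ?case
        by (rule top)
    next
      case (step k)
      have "ideal_pow I k \<subseteq> J + ideal_pow I (Suc k)"
        using ideal_pow_subset_plus_ideal_pow_Suc[OF I J gen step.prems] .
      also have "\<dots> \<subseteq> J + J"
        using step.IH by (intro set_plus_mono2) simp_all
      also have "\<dots> \<subseteq> J"
        by (rule ideal_plus_subset[OF J order_refl order_refl])
      finally show ?case .
    qed
  qed
  then show ?thesis
    using I ideal_pow_Suc_0 by fastforce
qed

section \<open>Units and exact zero divisors\<close>

lemma subset_image_mult_max_ideal:
  assumes I: "is_ideal I" and "I \<subseteq> principal a" and "a \<notin> I"
  shows "I \<subseteq> (*) a ` max_ideal"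
proof
  fix y assume "y \<in> I"
  then obtain r where r: "y = r * a"
    using assms(2) unfolding principal_def by blast
  have "\<not> r dvd 1"
  proof
    assume "r dvd 1"
    then obtain k where "1 = r * k"
      by (rule dvdE)
    then have "a = k * y"
      using r by (metis mult.assoc mult.commute mult_1)
    then show False
      using is_idealD(3)[OF I \<open>y \<in> I\<close>] \<open>a \<notin> I\<close> by simp
  qed
  then show "y \<in> (*) a ` max_ideal"
    using r by (auto simp: max_ideal_def mult.commute)
qed

lemma exact_zero_divisor_has_complementary:
  assumes "exact_zero_divisor a"
  obtains b where "complementary_divisor a b"
proof -
  obtain f :: "'a \<Rightarrow> 'a" where f: "\<forall>r x. f (r * x) = r * f x" "range f = ann a" "{x. f x = 0} = principal a"
    using assms unfolding exact_zero_divisor_def by blast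
  define b where "b = f 1"
  have f_eq: "f r = r * b" for r
    using f(1) b_def by (metis mult_1_right)
  then have "range f = principal b" "{x. f x = 0} = ann b"
    by (auto simp: principal_def ann_def)
  then show ?thesis
    using that f(2,3) by (simp add: complementary_divisor_def)
qed

lemma complementary_divisor_in_max_ideal:
  assumes "exact_zero_divisor a" "complementary_divisor a b"
  shows "b \<in> max_ideal"
proof -
  have "ann a \<noteq> UNIV"
    using assms(1) by (simp add: exact_zero_divisor_def)
  moreover have "principal b = UNIV" if "b dvd 1"
  proof -
    obtain k where "1 = b * k"
      using \<open>b dvd 1\<close> by (rule dvdE)
    then have "x = (x * k) * b" for x
      by (metis mult.assoc mult.commute mult_1_right)
    then show ?thesis
      unfolding principal_def by blast
  qed
  ultimately show ?thesis
    using assms(2) by (auto simp: complementary_divisor_def max_ideal_def)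
qed

section \<open>Minimal numbers of generators and the Hilbert function\<close>

declare ideal_pow.simps(2) [simp del]

lemma mu_le: "finite S \<Longrightarrow> ideal_gen S = N \<Longrightarrow> mu N \<le> card S"
  unfolding mu_def by (rule Least_le) blast

lemma set_plus_setcompr: "{x + y |x y. x \<in> A \<and> y \<in> B} = A + B"
  by (auto simp: set_plus_def)

lemma hilbert_fun_altdef:
  "hilbert_fun (T :: 'a itself) n = (LEAST d. \<exists>S::'a::comm_ring_1 set. finite S \<and> card S = d \<and>
      S \<subseteq> ideal_pow max_ideal n \<and> ideal_pow max_ideal n = ideal_gen S + ideal_pow max_ideal (Suc n))"
  by (simp add: hilbert_fun_def set_plus_setcompr)

lemma ideal_pow_eq_gen_plus:
  assumes "S \<subseteq> ideal_pow I n" "ideal_pow I n \<subseteq> ideal_gen S + ideal_pow I (Suc n)"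
  shows "ideal_pow I n = ideal_gen S + ideal_pow I (Suc n)"
proof
  show "ideal_gen S + ideal_pow I (Suc n) \<subseteq> ideal_pow I n"
    by (rule ideal_plus_subset[OF is_ideal_ideal_pow ideal_gen_least[OF is_ideal_ideal_pow assms(1)]
          ideal_pow_Suc_subset])
qed (rule assms(2))

lemma hilbert_fun_le:
  fixes T :: "'a::comm_ring_1 itself" and S :: "'a set"
  assumes "finite S" "S \<subseteq> ideal_pow max_ideal n"
    "ideal_pow max_ideal n \<subseteq> ideal_gen S + ideal_pow max_ideal (Suc n)"
  shows "hilbert_fun T n \<le> card S"
  unfolding hilbert_fun_altdef
  using assms ideal_pow_eq_gen_plus[OF assms(2,3)] by (intro Least_le exI[of _ S]) blast

lemma hilbert_fun_0_le_1: "hilbert_fun (T :: 'a::comm_ring_1 itself) 0 \<le> 1"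
  using hilbert_fun_le[of "{1::'a}" 0 T]
    subset_ideal_plus[OF is_ideal_ideal_pow, of UNIV max_ideal "Suc 0"]
  by (simp add: ideal_gen_one)

lemma hilbert_fun_eq_0:
  fixes T :: "'a::comm_ring_1 itself"
  assumes "ideal_pow (max_ideal :: 'a set) n = {0}"
  shows "hilbert_fun T n = 0"
  using hilbert_fun_le[of "{}" n T] assms is_idealD(1)[OF is_ideal_ideal_pow, of max_ideal "Suc n"]
  by (simp add: ideal_gen_empty)

locale noetherian_local_ring =
  fixes T :: "'a::comm_ring_1 itself"
  assumes local: "local_ring T" and noetherian: "noetherian_ring T"
begin

abbreviation M :: "'a set" where "M \<equiv> max_ideal"

lemma is_ideal_M: "is_ideal M"
  using local by (simp add: local_ring_def)

lemma finitely_generated: "is_ideal (I :: 'a set) \<Longrightarrow> \<exists>S. finite S \<and> ideal_gen S = I"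
  using noetherian by (simp add: noetherian_ring_def)

lemma mu_witness:
  assumes "is_ideal (N :: 'a set)"
  obtains S where "finite S" "card S = mu N" "ideal_gen S = N"
proof -
  have "\<exists>n S. finite S \<and> card S = n \<and> ideal_gen S = N"
    using finitely_generated[OF assms] by blast
  from LeastI_ex[OF this] show ?thesis
    using that unfolding mu_def by blast
qed

lemma hilbert_fun_witness:
  obtains S where "finite S" "card S = hilbert_fun T n" "S \<subseteq> ideal_pow M n"
    "ideal_pow M n \<subseteq> ideal_gen S + ideal_pow M (Suc n)"
proof -
  obtain S where S: "finite S" "ideal_gen S = ideal_pow M n"
    using finitely_generated[OF is_ideal_ideal_pow] by blast
  have sub: "S \<subseteq> ideal_pow M n"
    using ideal_gen_subset[of S] S(2) by simp
  have "ideal_pow M n \<subseteq> ideal_gen S + ideal_pow M (Suc n)"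
    using subset_ideal_plus[OF is_ideal_ideal_pow] S(2) by simp
  then have "ideal_pow M n = ideal_gen S + ideal_pow M (Suc n)"
    by (rule ideal_pow_eq_gen_plus[OF sub])
  then have "\<exists>d S. finite S \<and> card S = d \<and> S \<subseteq> ideal_pow M n \<and>
      ideal_pow M n = ideal_gen S + ideal_pow M (Suc n)"
    using S(1) sub by blast
  then have "\<exists>S. finite S \<and> card S = hilbert_fun T n \<and> S \<subseteq> ideal_pow M n \<and>
      ideal_pow M n = ideal_gen S + ideal_pow M (Suc n)"
    unfolding hilbert_fun_altdef by (rule LeastI_ex)
  then obtain S' where "finite S'" "card S' = hilbert_fun T n" "S' \<subseteq> ideal_pow M n"
      "ideal_pow M n = ideal_gen S' + ideal_pow M (Suc n)"
    by blast
  then show ?thesis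
    by (intro that) auto
qed

lemma hilbert_fun_Suc_le:
  assumes "a \<in> M" "ideal_pow M (Suc n) \<subseteq> (*) a ` ideal_pow M n"
  shows "hilbert_fun T (Suc n) \<le> hilbert_fun T n"
proof -
  obtain S where S: "finite S" "card S = hilbert_fun T n" "S \<subseteq> ideal_pow M n"
    "ideal_pow M n \<subseteq> ideal_gen S + ideal_pow M (Suc n)"
    by (rule hilbert_fun_witness)
  have mult_a: "x * a \<in> ideal_pow M (Suc k)" if "x \<in> ideal_pow M k" for x k
    using ideal_prod_mem[OF that assms(1)] by (simp add: ideal_pow.simps(2))
  have "ideal_pow M (Suc n) \<subseteq> ideal_gen ((*) a ` S) + ideal_pow M (Suc (Suc n))"
  proof
    fix y assume "y \<in> ideal_pow M (Suc n)"
    then obtain x where "y = a * x" "x \<in> ideal_pow M n"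
      using assms(2) by blast
    then obtain z w where "x = z + w" "z \<in> ideal_gen S" "w \<in> ideal_pow M (Suc n)"
      using S(4) set_plus_elim by blast
    then have "y = a * z + a * w" "z \<in> ideal_gen S" "w \<in> ideal_pow M (Suc n)"
      using \<open>y = a * x\<close> by (simp_all add: distrib_left)
    moreover have "a * z \<in> ideal_gen ((*) a ` S)"
      using \<open>z \<in> ideal_gen S\<close> by (simp add: ideal_gen_image_mult)
    moreover have "a * w \<in> ideal_pow M (Suc (Suc n))"
      using mult_a[OF \<open>w \<in> ideal_pow M (Suc n)\<close>] by (simp add: mult.commute)
    ultimately show "y \<in> ideal_gen ((*) a ` S) + ideal_pow M (Suc (Suc n))"
      by (simp add: set_plus_intro)
  qed
  moreover have "(*) a ` S \<subseteq> ideal_pow M (Suc n)"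
    using S(3) mult_a by (auto simp: mult.commute)
  ultimately have "hilbert_fun T (Suc n) \<le> card ((*) a ` S)"
    using S(1) by (intro hilbert_fun_le) simp_all
  also have "\<dots> \<le> hilbert_fun T n"
    using card_image_le[OF S(1), of "(*) a"] S(2) by simp
  finally show ?thesis .
qed

lemma mu_max_ideal_le:
  assumes "ideal_pow M n = {0}" "finite S" "S \<subseteq> M" "M \<subseteq> ideal_gen S + ideal_pow M 2"
  shows "mu M \<le> card S"
proof -
  have "M \<subseteq> ideal_gen S"
    using nilpotent_nakayama[OF is_ideal_M is_ideal_ideal_gen assms(1,4)] .
  moreover have "ideal_gen S \<subseteq> M"
    by (rule ideal_gen_least[OF is_ideal_M assms(3)])
  ultimately show ?thesis
    using mu_le[OF assms(2)] by auto
qed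

end

section \<open>Local rings with \<open>m\<^sup>4 = 0\<close>\<close>

locale local_ring_m4 = noetherian_local_ring T for T :: "'a::comm_ring_1 itself" +
  assumes m4: "ideal_pow (max_ideal :: 'a set) 4 = {0}"
begin

lemma M_pow_2: "ideal_pow M 2 = ideal_prod M M"
proof -
  have "ideal_pow M (Suc (Suc 0)) = ideal_prod (ideal_pow M (Suc 0)) M"
    by (rule ideal_pow.simps(2))
  then show ?thesis
    using is_ideal_M by (simp add: numeral_2_eq_2)
qed

lemma M_pow_3: "ideal_pow M 3 = ideal_prod (ideal_pow M 2) M"
proof -
  have "ideal_pow M (Suc 2) = ideal_prod (ideal_pow M 2) M"
    by (rule ideal_pow.simps(2))
  moreover have "Suc 2 = (3 :: nat)"
    by simp
  ultimately show ?thesis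
    by simp
qed

lemma mult_mem_M_pow: "x \<in> ideal_pow M i \<Longrightarrow> y \<in> ideal_pow M j \<Longrightarrow> x * y \<in> ideal_pow M (i + j)"
  by (rule ideal_pow_mult[OF is_ideal_M])

lemma mult_M_pow_2_eq_0: "x \<in> ideal_pow M 2 \<Longrightarrow> y \<in> ideal_pow M 2 \<Longrightarrow> x * y = 0"
  using mult_mem_M_pow[of x 2 y 2] m4 by simp

lemma M_pow_2_subset_image_mult:
  assumes "ann b = principal a" "b \<in> ideal_pow M 2" "a \<notin> ideal_pow M 2"
  shows "ideal_pow M 2 \<subseteq> (*) a ` M"
proof (rule subset_image_mult_max_ideal[OF is_ideal_ideal_pow _ assms(3)])
  show "ideal_pow M 2 \<subseteq> principal a"
    using mult_M_pow_2_eq_0[OF _ assms(2)] by (auto simp: assms(1)[symmetric] ann_def)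
qed

lemma principal_subset_M_pow_2: "b \<in> ideal_pow M 2 \<Longrightarrow> principal b \<subseteq> ideal_pow M 2"
  unfolding principal_eq_ideal_gen by (rule ideal_gen_least[OF is_ideal_ideal_pow]) simp

lemma hilbert_series_at_neg1_eq:
  "hilbert_series_at_neg1 T =
     int (hilbert_fun T 0) - int (hilbert_fun T 1) + int (hilbert_fun T 2) - int (hilbert_fun T 3)"
proof -
  have vanish: "hilbert_fun T n = 0" if "n \<ge> 4" for n
  proof (rule hilbert_fun_eq_0)
    show "ideal_pow M n = {0}"
      using ideal_pow_antimono[OF that, of M] m4 is_idealD(1)[OF is_ideal_ideal_pow, of M n] by auto
  qed
  have "{n. hilbert_fun T n \<noteq> 0} \<subseteq> {..<4}"
  proof
    fix n assume "n \<in> {n. hilbert_fun T n \<noteq> 0}"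
    then show "n \<in> {..<4}"
      using vanish by (cases "n \<ge> 4") auto
  qed
  then have "hilbert_series_at_neg1 T = (\<Sum>n<4. (-1) ^ n * int (hilbert_fun T n))"
    unfolding hilbert_series_at_neg1_def by (intro sum.mono_neutral_left) auto
  also have "\<dots> = int (hilbert_fun T 0) - int (hilbert_fun T 1) + int (hilbert_fun T 2) - int (hilbert_fun T 3)"
    by (simp add: eval_nat_numeral)
  finally show ?thesis .
qed

lemma mult_M_mem_M_pow_Suc:
  "x \<in> M \<Longrightarrow> y \<in> ideal_pow M n \<Longrightarrow> x * y \<in> ideal_pow M (Suc n)"
  using mult_mem_M_pow[of x 1 y n] is_ideal_M by simp

lemma mu_max_ideal_le_by_division:
  assumes S: "finite S" "S \<subseteq> (*) c ` M" "(*) c ` M \<subseteq> ideal_gen S"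
    and V: "finite V" "V \<subseteq> M" "ann c \<subseteq> ideal_gen V + ideal_pow M 2"
  shows "mu M \<le> card S + card V"
proof -
  obtain W where W: "W \<subseteq> M" "finite W" "card W = card S" "M \<subseteq> ideal_gen W + ann c"
    using S by (rule subset_ideal_gen_plus_ann)
  have "M \<subseteq> ideal_gen W + (ideal_gen V + ideal_pow M 2)"
    using W(4) set_plus_mono2[OF order_refl V(3)] by (rule order_trans)
  then have "M \<subseteq> ideal_gen (W \<union> V) + ideal_pow M 2"
    by (simp add: ideal_gen_Un add.assoc)
  then have "mu M \<le> card (W \<union> V)"
    using W(1,2) V(1,2) by (intro mu_max_ideal_le[OF m4]) auto
  also have "\<dots> \<le> card S + card V"
    using card_Un_le[of W V] W(3) by simp
  finally show ?thesis .
qed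

lemma M_pow_3_generated_by_one:
  assumes H: "hilbert_series_at_neg1 T = 0" and a: "a \<in> M" "ideal_pow M 2 \<subseteq> (*) a ` M"
  obtains S where "finite S" "card S \<le> 1" "S \<subseteq> ideal_pow M 3" "ideal_pow M 3 \<subseteq> ideal_gen S"
proof -
  have "hilbert_fun T 2 \<le> hilbert_fun T 1"
    using hilbert_fun_Suc_le[of a 1] a is_ideal_M by (simp add: numeral_2_eq_2)
  then have "hilbert_fun T 3 \<le> 1"
    using H hilbert_series_at_neg1_eq hilbert_fun_0_le_1[of T] by linarith
  moreover obtain S where S: "finite S" "card S = hilbert_fun T 3" "S \<subseteq> ideal_pow M 3"
    "ideal_pow M 3 \<subseteq> ideal_gen S + ideal_pow M (Suc 3)"
    by (rule hilbert_fun_witness)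
  moreover have "ideal_pow M (Suc 3) = {0}"
    using m4 by (simp add: numeral_eq_Suc)
  ultimately show ?thesis
    using that by simp
qed

lemma complementary_divisor_notin_M_pow_2:
  assumes H: "hilbert_series_at_neg1 T = 0" and cd: "complementary_divisor a b"
    and a: "a \<in> M" "a \<notin> ideal_pow M 2" and e: "3 \<le> mu M"
  shows "b \<notin> ideal_pow M 2"
proof
  assume b2: "b \<in> ideal_pow M 2"
  have ann: "ann a = principal b" "ann b = principal a"
    using cd by (simp_all add: complementary_divisor_def)
  have M2: "ideal_pow M 2 \<subseteq> (*) a ` M"
    by (rule M_pow_2_subset_image_mult[OF ann(2) b2 a(2)])
  have M3: "ideal_pow M 3 \<subseteq> (*) a ` ideal_pow M 2"
    using ideal_prod_subset_image_mult[OF M2, of M] by (simp add: M_pow_3 M_pow_2)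
  obtain S3 where S3: "finite S3" "card S3 \<le> 1" "S3 \<subseteq> ideal_pow M 3" "ideal_pow M 3 \<subseteq> ideal_gen S3"
    using H a(1) M2 by (rule M_pow_3_generated_by_one)
  have "(*) a ` ideal_pow M 2 \<subseteq> ideal_gen S3"
    using mult_M_mem_M_pow_Suc[OF a(1), of _ 2] S3(4) by (auto simp: numeral_3_eq_3 numeral_2_eq_2)
  with S3(1) order_trans[OF S3(3) M3]
  obtain W where W: "W \<subseteq> ideal_pow M 2" "finite W" "card W = card S3"
    "ideal_pow M 2 \<subseteq> ideal_gen W + ann a"
    by (rule subset_ideal_gen_plus_ann)
  let ?S2 = "W \<union> {b}"
  have M2_gen: "ideal_pow M 2 \<subseteq> ideal_gen ?S2"
    using W(4) ideal_gen_Un[of W "{b}"] by (simp add: ann(1) principal_eq_ideal_gen)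
  have "finite ?S2"
    using W(2) by simp
  moreover have "?S2 \<subseteq> (*) a ` M"
    using W(1) b2 M2 by blast
  moreover have "(*) a ` M \<subseteq> ideal_gen ?S2"
    using mult_M_mem_M_pow_Suc[OF a(1), of _ 1] M2_gen is_ideal_M by (auto simp: numeral_2_eq_2)
  moreover have "ann a \<subseteq> ideal_gen {} + ideal_pow M 2"
    using principal_subset_M_pow_2[OF b2] ann(1) by (simp add: ideal_gen_empty)
  ultimately have "mu M \<le> card ?S2 + card ({} :: 'a set)"
    by (intro mu_max_ideal_le_by_division) auto
  also have "\<dots> \<le> card W + 1"
    using card_Un_le[of W "{b}"] by simp
  finally show False
    using e S3(2) W(3) by simp
qed

lemma mu_M_pow_3_generators:
  obtains S where "finite S" "card S = mu (ideal_pow M 3)" "S \<subseteq> ideal_pow M 3"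
    "ideal_gen S = ideal_pow M 3"
proof -
  obtain S where "finite S" "card S = mu (ideal_pow M 3)" "ideal_gen S = ideal_pow M 3"
    using is_ideal_ideal_pow by (rule mu_witness)
  then show ?thesis
    using that ideal_gen_subset[of S] by simp
qed

lemma mu_M_le_if_complementary_in_M_pow_2:
  assumes cd: "complementary_divisor a b" and a2: "a \<in> ideal_pow M 2" and b2: "b \<in> ideal_pow M 2"
  shows "mu M \<le> mu (ideal_pow M 3)"
proof -
  have ann: "ann a = principal b" "ann b = principal a"
    using cd by (simp_all add: complementary_divisor_def)
  obtain S where S: "finite S" "card S = mu (ideal_pow M 3)" "S \<subseteq> ideal_pow M 3"
    "ideal_gen S = ideal_pow M 3"
    by (rule mu_M_pow_3_generators)
  have "ideal_pow M 2 \<subseteq> (*) a ` UNIV"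
    using mult_M_pow_2_eq_0[OF _ b2] by (auto simp: ann_def ann(2)[symmetric] principal_eq_image[symmetric])
  then have "ideal_pow M 3 \<subseteq> (*) a ` M"
    using ideal_prod_subset_image_mult[of _ a UNIV M] by (simp add: M_pow_3 ideal_prod_UNIV_left[OF is_ideal_M])
  moreover have "(*) a ` M \<subseteq> ideal_gen S"
    using mult_mem_M_pow[OF a2, of _ 1] is_ideal_M S(4) by (auto simp: numeral_3_eq_3 numeral_2_eq_2)
  moreover have "ann a \<subseteq> ideal_gen {} + ideal_pow M 2"
    using principal_subset_M_pow_2[OF b2] ann(1) by (simp add: ideal_gen_empty)
  ultimately have "mu M \<le> card S + card ({} :: 'a set)"
    using S(1,3) by (intro mu_max_ideal_le_by_division) auto
  then show ?thesis
    using S(2) by simp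
qed

lemma mu_M_le_if_complementary_notin_M_pow_2:
  assumes cd: "complementary_divisor a b" and a2: "a \<in> ideal_pow M 2" and b: "b \<in> M" "b \<notin> ideal_pow M 2"
  shows "mu M \<le> mu (ideal_pow M 3) + 1"
proof -
  have ann: "ann a = principal b" "ann b = principal a"
    using cd by (simp_all add: complementary_divisor_def)
  obtain S where S: "finite S" "card S = mu (ideal_pow M 3)" "S \<subseteq> ideal_pow M 3"
    "ideal_gen S = ideal_pow M 3"
    by (rule mu_M_pow_3_generators)
  have M2: "ideal_pow M 2 \<subseteq> (*) b ` M"
    by (rule M_pow_2_subset_image_mult[OF ann(1) a2 b(2)])
  then obtain v where v: "v \<in> M" "a = b * v"
    using a2 by blast
  have "ideal_pow M 3 \<subseteq> (*) b ` ideal_pow M 2"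
    using ideal_prod_subset_image_mult[OF M2, of M] by (simp add: M_pow_3 M_pow_2)
  also have "\<dots> \<subseteq> (*) b ` (*) b ` M"
    using M2 by (rule image_mono)
  also have "\<dots> = (*) (b * b) ` M"
    by (simp add: image_image mult.assoc)
  finally have M3: "ideal_pow M 3 \<subseteq> (*) (b * b) ` M" .
  have "b * b \<in> ideal_pow M 2"
    using mult_M_mem_M_pow_Suc[OF b(1), of b 1] b(1) is_ideal_M by (simp add: numeral_2_eq_2)
  then have "(*) (b * b) ` M \<subseteq> ideal_gen S"
    using mult_mem_M_pow[of "b * b" 2 _ 1] is_ideal_M S(4) by (auto simp: numeral_3_eq_3 numeral_2_eq_2)
  moreover have "ann (b * b) \<subseteq> ideal_gen {v} + ideal_pow M 2"
  proof -
    have "ann (b * b) \<subseteq> ideal_gen {v} + ann b"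
      using ann(2) v(2) by (intro ann_mult_self_subset) (simp add: mult.commute)
    also have "\<dots> \<subseteq> ideal_gen {v} + ideal_pow M 2"
      using principal_subset_M_pow_2[OF a2] ann(2) by (intro set_plus_mono2) simp_all
    finally show ?thesis .
  qed
  ultimately have "mu M \<le> card S + card {v}"
    using S(1,3) M3 v(1) by (intro mu_max_ideal_le_by_division) auto
  then show ?thesis
    using S(2) by simp
qed

lemma exact_zero_divisor_notin_M_pow_2:
  assumes e: "mu (ideal_pow M 3) + 2 \<le> mu M" and ezd: "exact_zero_divisor a"
  shows "a \<notin> ideal_pow M 2"
proof
  assume a2: "a \<in> ideal_pow M 2"
  obtain b where cd: "complementary_divisor a b"
    using ezd by (rule exact_zero_divisor_has_complementary)
  then have "b \<in> M"
    by (rule complementary_divisor_in_max_ideal[OF ezd])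
  then have "mu M \<le> mu (ideal_pow M 3) + 1"
    using mu_M_le_if_complementary_in_M_pow_2[OF cd a2]
      mu_M_le_if_complementary_notin_M_pow_2[OF cd a2] by fastforce
  then show False
    using e by simp
qed

end

theorem lemma2p4:
  fixes T :: "'a::comm_ring_1 itself" and e :: nat
  assumes "local_ring T" and "noetherian_ring T"
    and "ideal_pow (max_ideal :: 'a set) 4 = {0}"
    and "e = mu (max_ideal :: 'a set)" and "e \<ge> 3"
  shows "(\<forall>a b :: 'a. hilbert_series_at_neg1 T = 0 \<and> exact_zero_divisor a \<and>
             a \<in> max_ideal - ideal_pow max_ideal 2 \<and> complementary_divisor a b
             \<longrightarrow> b \<in> max_ideal - ideal_pow max_ideal 2)
       \<and> (mu (ideal_pow (max_ideal :: 'a set) 3) + 2 \<le> e \<longrightarrow>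
           (\<forall>a :: 'a. exact_zero_divisor a \<and> a \<noteq> 0 \<longrightarrow> a \<notin> ideal_pow max_ideal 2))"
proof -
  interpret local_ring_m4 T
    using assms(1-3) by unfold_locales
  show ?thesis
  proof (intro conjI allI impI)
    fix a b :: 'a
    assume "hilbert_series_at_neg1 T = 0 \<and> exact_zero_divisor a \<and>
      a \<in> max_ideal - ideal_pow max_ideal 2 \<and> complementary_divisor a b"
    then show "b \<in> max_ideal - ideal_pow max_ideal 2"
      using complementary_divisor_in_max_ideal complementary_divisor_notin_M_pow_2 assms(4,5) by auto
  next
    fix a :: 'a
    assume "mu (ideal_pow M 3) + 2 \<le> e" and "exact_zero_divisor a \<and> a \<noteq> 0"
    then show "a \<notin> ideal_pow max_ideal 2"
      using exact_zero_divisor_notin_M_pow_2 assms(4) by blast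
  qed
qed

end
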